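(* Let $(\mathbb{H},\langle\cdot,\cdot\rangle)$ be a separable Hilbert space with norm $\|\cdot\|_{\mathbb{H}}$, and let $(D_j)_{j\geq1}$ be a square integrable $\mathbb{H}$-valued martingale difference sequence with respect to a filtration $(\mathcal{F}_j)_{j\geq0}$ such that for each $j\geq 1$, $$\mathbb{E}[\|D_j\|_{\mathbb{H}}^2\mid\mathcal{F}_{j-1}]=\mathbb{E}[\|D_j\|_{\mathbb{H}}^2\mid\mathcal{F}_0]\quad\text{a.s.}$$ Then for every $n\geq1$ and all $x,y>0$, $$\mathbb{P}\Big(\max_{1\leq k\leq n}\Big\|\sum_{j=1}^kD_j\Big\|_{\mathbb{H}}>x\Big)\leq 4\exp\Big(-\frac{x^2}{y^2}\Big)+4\int_1^\infty u\,\mathbb{P}\Big(\sqrt{\sum_{j=1}^n\|D_j\|_{\mathbb{H}}^2}>\frac{yu}{8}\Big)\,du.$$ *)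

theory Defs
  imports "HOL-Probability.Probability"
begin

definition filtration :: "'a measure \<Rightarrow> (nat \<Rightarrow> 'a measure) \<Rightarrow> bool" where
  "filtration M F \<longleftrightarrow> (\<forall>j. subalgebra M (F j)) \<and> (\<forall>i j. i \<le> j \<longrightarrow> sets (F i) \<subseteq> sets (F j))"

definition martingale_difference ::
  "'a measure \<Rightarrow> (nat \<Rightarrow> 'a measure) \<Rightarrow> (nat \<Rightarrow> 'a \<Rightarrow> 'b::{banach, second_countable_topology}) \<Rightarrow> bool" where
  "martingale_difference M F D \<longleftrightarrow>
     (\<forall>j\<ge>1. D j \<in> borel_measurable (F j) \<and> integrable M (D j) \<and>
        (\<forall>A\<in>sets (F (j - 1)). set_lebesgue_integral M A (D j) = 0))"

end

(*
  For l >= 0 let T_k be the sum of the |D_j|^2 and W_k the sum of their conditional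
  variances E[|D_j|^2 | F_(j-1)]. The Hilbert-space inequality
    cosh (l |f + d|) exp (- l^2 |d|^2) <= cosh (l |f|) (1 + l^2 |d|^2) + (a term linear in d)
  makes cosh (l |S_k|) exp (- l^2 (T_k + W_k)) a supermartingale as long as |S_k| <= x: the linear
  term is killed by the martingale property and the quadratic one is compensated by W. Stopping it
  when |S_k| first exceeds x bounds P(max |S_k| > x, T_n + W_n <= 5 y^2/64) by 2 exp (- x^2/y^2)
  for l = 2x/y^2. The events T_n > 3 y^2/64 and W_n > 2 y^2/64 are controlled by E[(T_n - y^2/64)_+];
  for W_n one uses that, by hypothesis, it is F_0-measurable and has the same integral as T_n over
  every F_0-event. Finally the layer-cake formula gives
    E[(T - c^2)_+] <= 2 c^2 * integral over [1, oo) of u P(sqrt T > c u) du.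
*)
theory Submission
  imports Defs
begin

lemma exp_diff_square_le: fixes t :: real shows "exp (t - t\<^sup>2) \<le> 1 + t + t\<^sup>2"
proof -
  have pos: "0 < 1 - t + t\<^sup>2"
    using zero_le_power2[of "t - 1/2"] by (simp add: power2_eq_square algebra_simps)
  have "1 - t + t\<^sup>2 \<le> exp (t\<^sup>2 - t)"
    using exp_ge_add_one_self[of "t\<^sup>2 - t"] by linarith
  then have "exp (t - t\<^sup>2) \<le> 1 / (1 - t + t\<^sup>2)"
    using pos by (simp add: exp_diff field_simps)
  also have "\<dots> \<le> 1 + t + t\<^sup>2"
  proof -
    have "(1 + t + t\<^sup>2) * (1 - t + t\<^sup>2) = 1 + t\<^sup>2 + (t\<^sup>2)\<^sup>2"
      by (simp add: power2_eq_square algebra_simps)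
    then have "1 \<le> (1 + t + t\<^sup>2) * (1 - t + t\<^sup>2)" by simp
    then show ?thesis using pos by (simp add: divide_le_eq)
  qed
  finally show ?thesis .
qed

lemma cosh_add_mult_exp_le:
  fixes a s :: real
  shows "cosh (a + s) * exp (- (s\<^sup>2)) \<le> cosh a + s * sinh a + s\<^sup>2 * cosh a"
proof -
  have "cosh (a + s) * exp (- (s\<^sup>2)) = (exp a * exp (s - s\<^sup>2) + exp (- a) * exp (- s - s\<^sup>2)) / 2"
    by (simp add: cosh_def exp_add[symmetric] field_simps exp_diff exp_minus)
  also have "\<dots> \<le> (exp a * (1 + s + s\<^sup>2) + exp (- a) * (1 - s + s\<^sup>2)) / 2"
    using exp_diff_square_le[of s] exp_diff_square_le[of "- s"]
    by (intro divide_right_mono add_mono mult_left_mono) auto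
  also have "\<dots> = cosh a + s * sinh a + s\<^sup>2 * cosh a"
    by (simp add: cosh_def sinh_def field_simps)
  finally show ?thesis .
qed

lemma sinh_le_mult_cosh: fixes z :: real assumes "0 \<le> z" shows "sinh z \<le> z * cosh z"
proof -
  have "(\<lambda>t. t * cosh t - sinh t) 0 \<le> (\<lambda>t. t * cosh t - sinh t) z"
  proof (rule DERIV_nonneg_imp_nondecreasing[OF assms])
    fix t :: real assume "0 \<le> t"
    then show "\<exists>y. ((\<lambda>t. t * cosh t - sinh t) has_real_derivative y) (at t) \<and> 0 \<le> y"
      by (intro exI[of _ "t * sinh t"]) (auto intro!: derivative_eq_intros simp: algebra_simps)
  qed
  then show ?thesis by simp
qed

lemma cosh_le_cosh_mult_exp:
  fixes u z :: real assumes "0 \<le> u" "u \<le> z"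
  shows "cosh z \<le> cosh u * exp ((z\<^sup>2 - u\<^sup>2) / 2)"
proof -
  have "(\<lambda>t. cosh t * exp (- (t\<^sup>2) / 2)) z \<le> (\<lambda>t. cosh t * exp (- (t\<^sup>2) / 2)) u"
  proof (rule DERIV_nonpos_imp_nonincreasing[OF assms(2)])
    fix t :: real assume "u \<le> t"
    then have "sinh t \<le> t * cosh t" using sinh_le_mult_cosh[of t] assms by simp
    then show "\<exists>y. ((\<lambda>t. cosh t * exp (- (t\<^sup>2) / 2)) has_real_derivative y) (at t) \<and> y \<le> 0"
      by (intro exI[of _ "(sinh t - t * cosh t) * exp (- (t\<^sup>2) / 2)"])
         (auto intro!: derivative_eq_intros mult_nonpos_nonneg simp: algebra_simps)
  qed
  then have "cosh z * exp (- (z\<^sup>2) / 2) * exp (z\<^sup>2 / 2) \<le> cosh u * exp (- (u\<^sup>2) / 2) * exp (z\<^sup>2 / 2)"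
    by (intro mult_right_mono) auto
  then show ?thesis by (simp add: mult.assoc exp_add[symmetric] diff_divide_distrib)
qed

text \<open>Writing \<open>s\<close> for the component of \<open>l d\<close> along \<open>f\<close>, the Pythagorean identity
  \<open>(l \<parallel>f + d\<parallel>)\<^sup>2 = (l \<parallel>f\<parallel> + s)\<^sup>2 + (l\<^sup>2 \<parallel>d\<parallel>\<^sup>2 - s\<^sup>2)\<close> reduces the claim to the scalar
  inequality \<open>cosh_add_mult_exp_le\<close>, the orthogonal part being absorbed by \<open>cosh_le_cosh_mult_exp\<close>.\<close>
lemma cosh_norm_add_mult_exp_le:
  fixes f d :: "'b::real_inner" and l :: real
  assumes "0 \<le> l"
  shows "cosh (l * norm (f + d)) * exp (- (l\<^sup>2 * (norm d)\<^sup>2))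
     \<le> cosh (l * norm f) * (1 + l\<^sup>2 * (norm d)\<^sup>2) + l * sinh (l * norm f) * (inner f d / norm f)"
proof -
  define a where "a = l * norm f"
  define s where "s = l * (inner f d / norm f)"
  define R where "R = l\<^sup>2 * (norm d)\<^sup>2"
  define Z where "Z = l * norm (f + d)"
  have sR: "s\<^sup>2 \<le> R"
  proof -
    have "\<bar>inner f d / norm f\<bar> \<le> norm d"
      using Cauchy_Schwarz_ineq2[of f d] by (cases "f = 0") (auto simp: divide_le_eq mult.commute)
    then have "(inner f d / norm f)\<^sup>2 \<le> (norm d)\<^sup>2"
      by (metis abs_le_square_iff abs_norm_cancel)
    then show ?thesis unfolding s_def R_def power_mult_distrib by (intro mult_left_mono) auto
  qed
  have Zsq: "Z\<^sup>2 = (a + s)\<^sup>2 + (R - s\<^sup>2)"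
  proof (cases "f = 0")
    case False
    have "2 * a * s = 2 * l\<^sup>2 * inner f d" using False by (simp add: a_def s_def power2_eq_square)
    moreover have "(norm (f + d))\<^sup>2 = (norm f)\<^sup>2 + 2 * inner f d + (norm d)\<^sup>2"
      by (simp add: power2_norm_eq_inner inner_add_left inner_add_right inner_commute)
    ultimately show ?thesis unfolding Z_def R_def power_mult_distrib
      by (simp add: power2_eq_square algebra_simps a_def) metis
  qed (simp add: Z_def a_def s_def R_def power_mult_distrib)
  have "\<bar>a + s\<bar> \<le> Z" using Zsq sR \<open>0 \<le> l\<close>
    by (metis Z_def abs_le_square_iff abs_of_nonneg le_add_same_cancel1 diff_ge_0_iff_ge
        norm_ge_zero zero_le_mult_iff)
  then have "cosh Z \<le> cosh (a + s) * exp ((R - s\<^sup>2) / 2)"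
    using cosh_le_cosh_mult_exp[of "\<bar>a + s\<bar>" Z] Zsq by simp
  then have "cosh Z * exp (- R) \<le> cosh (a + s) * exp ((R - s\<^sup>2) / 2) * exp (- R)"
    by (intro mult_right_mono) auto
  also have "\<dots> = cosh (a + s) * exp ((R - s\<^sup>2) / 2 - R)" by (simp add: mult.assoc exp_add[symmetric])
  also have "\<dots> \<le> cosh (a + s) * exp (- (s\<^sup>2))"
    using sR by (intro mult_left_mono) (auto simp: cosh_real_nonneg field_simps)
  also have "\<dots> \<le> cosh a + s * sinh a + s\<^sup>2 * cosh a" by (rule cosh_add_mult_exp_le)
  also have "\<dots> \<le> cosh a + s * sinh a + R * cosh a"
    using sR by (intro add_left_mono mult_right_mono) (auto simp: cosh_real_nonneg)
  finally show ?thesis by (simp add: a_def s_def R_def Z_def algebra_simps)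
qed

lemma exp_minus_mult_one_plus_le: fixes t :: real shows "exp (- t) * (1 + t) \<le> 1"
proof -
  have "exp (- t) * (1 + t) \<le> exp (- t) * exp t"
    using exp_ge_add_one_self[of t] by (intro mult_left_mono) (auto simp: add.commute)
  then show ?thesis by (simp add: mult_exp_exp)
qed

lemma exp_div_cosh_le: fixes a b :: real shows "exp a / cosh b \<le> 2 * exp (a - b)"
proof -
  have "exp b / 2 \<le> cosh b" by (simp add: cosh_def)
  then have "exp a / cosh b \<le> exp a / (exp b / 2)"
    by (intro divide_left_mono) (auto simp: cosh_real_pos)
  then show ?thesis by (simp add: exp_diff mult.commute)
qed

lemma borel_measurable_cosh_real [measurable]: "(cosh :: real \<Rightarrow> real) \<in> borel_measurable borel"
  by (intro borel_measurable_continuous_onI continuous_intros)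

lemma borel_measurable_sinh_real [measurable]: "(sinh :: real \<Rightarrow> real) \<in> borel_measurable borel"
  by (intro borel_measurable_continuous_onI continuous_intros)

lemma integrable_bounded_mult:
  fixes f g :: "'a \<Rightarrow> real"
  assumes "integrable M f" "g \<in> borel_measurable M" "\<And>\<omega>. \<omega> \<in> space M \<Longrightarrow> \<bar>g \<omega>\<bar> \<le> C"
  shows "integrable M (\<lambda>\<omega>. g \<omega> * f \<omega>)"
proof (rule Bochner_Integration.integrable_bound[where f = "\<lambda>\<omega>. C * \<bar>f \<omega>\<bar>"])
  show "integrable M (\<lambda>\<omega>. C * \<bar>f \<omega>\<bar>)" using assms(1) by auto
  show "(\<lambda>\<omega>. g \<omega> * f \<omega>) \<in> borel_measurable M" using assms(1,2) by measurable
  show "AE \<omega> in M. norm (g \<omega> * f \<omega>) \<le> norm (C * \<bar>f \<omega>\<bar>)"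
  proof (intro AE_I2)
    fix \<omega> assume "\<omega> \<in> space M"
    then have "\<bar>g \<omega>\<bar> \<le> \<bar>C\<bar>" using assms(3) by (meson abs_ge_self order_trans)
    then show "norm (g \<omega> * f \<omega>) \<le> norm (C * \<bar>f \<omega>\<bar>)" by (simp add: abs_mult mult_right_mono)
  qed
qed

lemma integrable_inner_bounded:
  fixes D H :: "'a \<Rightarrow> 'b::{real_inner, banach, second_countable_topology}"
  assumes "integrable M D" "H \<in> borel_measurable M" "\<And>\<omega>. \<omega> \<in> space M \<Longrightarrow> norm (H \<omega>) \<le> C"
  shows "integrable M (\<lambda>\<omega>. inner (H \<omega>) (D \<omega>))"
proof (rule Bochner_Integration.integrable_bound[where f = "\<lambda>\<omega>. C * norm (D \<omega>)"])
  show "integrable M (\<lambda>\<omega>. C * norm (D \<omega>))" using assms(1) by auto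
  show "(\<lambda>\<omega>. inner (H \<omega>) (D \<omega>)) \<in> borel_measurable M" using assms(1,2) by measurable
  show "AE \<omega> in M. norm (inner (H \<omega>) (D \<omega>)) \<le> norm (C * norm (D \<omega>))"
  proof (intro AE_I2)
    fix \<omega> assume "\<omega> \<in> space M"
    then have "\<bar>inner (H \<omega>) (D \<omega>)\<bar> \<le> C * norm (D \<omega>)"
      using Cauchy_Schwarz_ineq2[of "H \<omega>" "D \<omega>"] assms(3) by (meson mult_right_mono norm_ge_zero order_trans)
    then show "norm (inner (H \<omega>) (D \<omega>)) \<le> norm (C * norm (D \<omega>))" by simp
  qed
qed

lemma integral_inner_simple_eq_0:
  fixes D :: "'a \<Rightarrow> 'b::{real_inner, banach, second_countable_topology}"
  assumes sub: "subalgebra M G" and D: "integrable M D"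
    and centered: "\<forall>A\<in>sets G. set_lebesgue_integral M A D = 0"
    and H: "simple_function G H"
  shows "(\<integral>\<omega>. inner (H \<omega>) (D \<omega>) \<partial>M) = 0"
proof -
  have space: "space G = space M" using sub by (simp add: subalgebra_def)
  define A where "A c = H -` {c} \<inter> space M" for c
  have AG: "A c \<in> sets G" for c using simple_functionD(2)[OF H, of "{c}"] space by (simp add: A_def)
  then have AM: "A c \<in> sets M" for c using sub by (auto simp: subalgebra_def)
  have fin: "finite (H ` space M)" using simple_functionD(1)[OF H] space by simp
  have "inner (H \<omega>) (D \<omega>) = (\<Sum>c\<in>H ` space M. inner c (indicator (A c) \<omega> *\<^sub>R D \<omega>))"
    if "\<omega> \<in> space M" for \<omega>
  proof -
    have "(\<Sum>c\<in>H ` space M. inner c (indicator (A c) \<omega> *\<^sub>R D \<omega>))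
        = (\<Sum>c\<in>H ` space M. if H \<omega> = c then inner c (D \<omega>) else 0)"
      using that by (intro sum.cong) (auto simp: A_def indicator_def)
    then show ?thesis using that fin by (simp add: sum.delta)
  qed
  then have "(\<integral>\<omega>. inner (H \<omega>) (D \<omega>) \<partial>M)
      = (\<integral>\<omega>. (\<Sum>c\<in>H ` space M. inner c (indicator (A c) \<omega> *\<^sub>R D \<omega>)) \<partial>M)"
    by (intro Bochner_Integration.integral_cong) auto
  also have "\<dots> = (\<Sum>c\<in>H ` space M. \<integral>\<omega>. inner c (indicator (A c) \<omega> *\<^sub>R D \<omega>) \<partial>M)"
    by (intro Bochner_Integration.integral_sum integrable_inner_right integrable_mult_indicator AM D)
  also have "\<dots> = (\<Sum>c\<in>H ` space M. inner c (set_lebesgue_integral M (A c) D))"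
    unfolding set_lebesgue_integral_def
    by (intro sum.cong refl integral_inner_right integrable_mult_indicator AM D)
  also have "\<dots> = 0" using centered AG by simp
  finally show ?thesis .
qed

lemma integral_inner_bounded_eq_0:
  fixes D H :: "'a \<Rightarrow> 'b::{real_inner, banach, second_countable_topology}"
  assumes sub: "subalgebra M G" and D: "integrable M D"
    and centered: "\<forall>A\<in>sets G. set_lebesgue_integral M A D = 0"
    and H: "H \<in> borel_measurable G" and bounded: "\<And>\<omega>. \<omega> \<in> space M \<Longrightarrow> norm (H \<omega>) \<le> C"
  shows "(\<integral>\<omega>. inner (H \<omega>) (D \<omega>) \<partial>M) = 0"
proof -
  have space: "space G = space M" using sub by (simp add: subalgebra_def)
  obtain Hs where simple: "\<And>i. simple_function G (Hs i)"
    and lim: "\<And>\<omega>. \<omega> \<in> space G \<Longrightarrow> (\<lambda>i. Hs i \<omega>) \<longlonglongrightarrow> H \<omega>"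
    and dom: "\<And>i \<omega>. \<omega> \<in> space G \<Longrightarrow> dist (Hs i \<omega>) 0 \<le> 2 * dist (H \<omega>) 0"
    using borel_measurable_implies_sequence_metric[OF H, of 0] by blast
  have [measurable]: "Hs i \<in> borel_measurable M" for i
    by (rule measurable_from_subalg[OF sub borel_measurable_simple_function[OF simple]])
  have [measurable]: "H \<in> borel_measurable M" "D \<in> borel_measurable M"
    using measurable_from_subalg[OF sub H] D by auto
  have "(\<lambda>i. \<integral>\<omega>. inner (Hs i \<omega>) (D \<omega>) \<partial>M) \<longlonglongrightarrow> (\<integral>\<omega>. inner (H \<omega>) (D \<omega>) \<partial>M)"
  proof (rule integral_dominated_convergence[where w = "\<lambda>\<omega>. 2 * C * norm (D \<omega>)"])
    show "AE \<omega> in M. (\<lambda>i. inner (Hs i \<omega>) (D \<omega>)) \<longlonglongrightarrow> inner (H \<omega>) (D \<omega>)"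
      using lim space by (intro AE_I2 tendsto_inner tendsto_const) auto
    show "AE \<omega> in M. norm (inner (Hs i \<omega>) (D \<omega>)) \<le> 2 * C * norm (D \<omega>)" for i
    proof (intro AE_I2)
      fix \<omega> assume "\<omega> \<in> space M"
      then have "norm (Hs i \<omega>) \<le> 2 * C" using dom[of \<omega> i] bounded[of \<omega>] space by simp
      then show "norm (inner (Hs i \<omega>) (D \<omega>)) \<le> 2 * C * norm (D \<omega>)"
        using Cauchy_Schwarz_ineq2[of "Hs i \<omega>" "D \<omega>"] by (simp add: mult_right_mono order_trans)
    qed
  qed (use D in auto)
  moreover have "(\<integral>\<omega>. inner (Hs i \<omega>) (D \<omega>) \<partial>M) = 0" for i
    by (rule integral_inner_simple_eq_0[OF sub D centered simple])
  ultimately show ?thesis by (simp add: LIMSEQ_const_iff)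
qed

lemma (in sigma_finite_subalgebra) integral_bounded_mult_real_cond_exp:
  assumes "integrable M g" "Z \<in> borel_measurable F" "\<And>\<omega>. \<omega> \<in> space M \<Longrightarrow> \<bar>Z \<omega>\<bar> \<le> C"
  shows "(\<integral>\<omega>. Z \<omega> * real_cond_exp M F g \<omega> \<partial>M) = (\<integral>\<omega>. Z \<omega> * g \<omega> \<partial>M)"
  using assms
  by (intro real_cond_exp_intg(2) integrable_bounded_mult) (auto intro: measurable_from_subalg[OF subalg])

lemma (in finite_measure_subalgebra) integral_le_compensated:
  fixes D H :: "'a \<Rightarrow> 'b::{real_inner, banach, second_countable_topology}"
  assumes D: "integrable M D" "\<forall>A\<in>sets F. set_lebesgue_integral M A D = 0"
    and D_sq: "integrable M (\<lambda>\<omega>. (norm (D \<omega>))\<^sup>2)"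
    and v: "v \<in> borel_measurable F" "AE \<omega> in M. v \<omega> = real_cond_exp M F (\<lambda>\<omega>. (norm (D \<omega>))\<^sup>2) \<omega>"
    and c: "c \<in> borel_measurable F" "\<And>\<omega>. \<bar>c \<omega>\<bar> \<le> C"
    and H: "H \<in> borel_measurable F" "\<And>\<omega>. norm (H \<omega>) \<le> K"
    and g: "g \<in> borel_measurable M" "\<And>\<omega>. 0 \<le> g \<omega>"
      "\<And>\<omega>. g \<omega> \<le> c \<omega> + a * (c \<omega> * (norm (D \<omega>))\<^sup>2) + inner (H \<omega>) (D \<omega>)"
  shows "integrable M g" and "integrable M (\<lambda>\<omega>. c \<omega> + a * (c \<omega> * v \<omega>))"
    and "(\<integral>\<omega>. g \<omega> \<partial>M) \<le> (\<integral>\<omega>. c \<omega> + a * (c \<omega> * v \<omega>) \<partial>M)"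
proof -
  define R where "R \<omega> = c \<omega> + a * (c \<omega> * (norm (D \<omega>))\<^sup>2) + inner (H \<omega>) (D \<omega>)" for \<omega>
  have [measurable]: "c \<in> borel_measurable M" "H \<in> borel_measurable M" "v \<in> borel_measurable M"
    "D \<in> borel_measurable M"
    using c H v D by (auto intro: measurable_from_subalg[OF subalg])
  have int_c: "integrable M c" using c by (intro integrable_const_bound[where B = C]) auto
  have int_cq: "integrable M (\<lambda>\<omega>. c \<omega> * (norm (D \<omega>))\<^sup>2)"
    using c by (intro integrable_bounded_mult[OF D_sq]) auto
  have int_HD: "integrable M (\<lambda>\<omega>. inner (H \<omega>) (D \<omega>))"
    using H by (intro integrable_inner_bounded[OF D(1)]) auto
  have "integrable M v"
    using integrable_cong_AE[of v M "real_cond_exp M F (\<lambda>\<omega>. (norm (D \<omega>))\<^sup>2)"] v(2) real_cond_exp_int(1)[OF D_sq]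
    by simp
  then have int_cv: "integrable M (\<lambda>\<omega>. c \<omega> * v \<omega>)"
    using c by (intro integrable_bounded_mult) auto
  then show "integrable M (\<lambda>\<omega>. c \<omega> + a * (c \<omega> * v \<omega>))" using int_c by auto
  have int_R: "integrable M R" unfolding R_def using int_c int_cq int_HD by auto
  show int_g: "integrable M g"
    using g(2,3) by (intro Bochner_Integration.integrable_bound[OF int_R g(1)] AE_I2)
      (auto simp: R_def intro: order_trans[OF _ abs_ge_self])
  have orth: "(\<integral>\<omega>. inner (H \<omega>) (D \<omega>) \<partial>M) = 0"
    using H by (intro integral_inner_bounded_eq_0[OF subalg D]) auto
  have "(\<integral>\<omega>. c \<omega> * (norm (D \<omega>))\<^sup>2 \<partial>M) = (\<integral>\<omega>. c \<omega> * real_cond_exp M F (\<lambda>\<omega>. (norm (D \<omega>))\<^sup>2) \<omega> \<partial>M)"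
    using c by (intro integral_bounded_mult_real_cond_exp[OF D_sq, symmetric]) auto
  also have "\<dots> = (\<integral>\<omega>. c \<omega> * v \<omega> \<partial>M)"
    using v(2) by (intro integral_cong_AE) auto
  finally have cond_var: "(\<integral>\<omega>. c \<omega> * (norm (D \<omega>))\<^sup>2 \<partial>M) = (\<integral>\<omega>. c \<omega> * v \<omega> \<partial>M)" .
  have "(\<integral>\<omega>. g \<omega> \<partial>M) \<le> (\<integral>\<omega>. R \<omega> \<partial>M)"
    using g(3) by (intro integral_mono int_g int_R) (simp add: R_def)
  also have "\<dots> = (\<integral>\<omega>. c \<omega> + a * (c \<omega> * v \<omega>) \<partial>M)"
    using int_c int_cq int_HD int_cv orth cond_var by (simp add: R_def)
  finally show "(\<integral>\<omega>. g \<omega> \<partial>M) \<le> (\<integral>\<omega>. c \<omega> + a * (c \<omega> * v \<omega>) \<partial>M)" .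
qed

text \<open>One step of the exponential supermartingale: \<open>cosh_norm_add_mult_exp_le\<close> puts the integrand in the
  form of \<open>integral_le_compensated\<close>, and the factor \<open>exp (- l\<^sup>2 v)\<close> absorbs the compensator.\<close>
lemma (in finite_measure_subalgebra) integral_cosh_norm_add_le:
  fixes D f :: "'a \<Rightarrow> 'b::{real_inner, banach, second_countable_topology}"
  assumes D: "integrable M D" "\<forall>A\<in>sets F. set_lebesgue_integral M A D = 0"
    and D_sq: "integrable M (\<lambda>\<omega>. (norm (D \<omega>))\<^sup>2)"
    and v: "v \<in> borel_measurable F" "\<And>\<omega>. 0 \<le> v \<omega>"
      "AE \<omega> in M. v \<omega> = real_cond_exp M F (\<lambda>\<omega>. (norm (D \<omega>))\<^sup>2) \<omega>"
    and f: "f \<in> borel_measurable F" and p: "p \<in> borel_measurable F" "\<And>\<omega>. 0 \<le> p \<omega>"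
    and bounded: "\<And>\<omega>. p \<omega> * cosh (l * norm (f \<omega>)) \<le> B" and l: "0 \<le> l"
  shows "integrable M (\<lambda>\<omega>. p \<omega> * exp (- (l\<^sup>2 * v \<omega>))
           * (cosh (l * norm (f \<omega> + D \<omega>)) * exp (- (l\<^sup>2 * (norm (D \<omega>))\<^sup>2))))" (is "integrable M ?g")
    and "(\<integral>\<omega>. p \<omega> * exp (- (l\<^sup>2 * v \<omega>)) * (cosh (l * norm (f \<omega> + D \<omega>)) * exp (- (l\<^sup>2 * (norm (D \<omega>))\<^sup>2))) \<partial>M)
      \<le> (\<integral>\<omega>. p \<omega> * cosh (l * norm (f \<omega>)) \<partial>M)"
proof -
  define q where "q \<omega> = p \<omega> * exp (- (l\<^sup>2 * v \<omega>))" for \<omega>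
  define c where "c \<omega> = q \<omega> * cosh (l * norm (f \<omega>))" for \<omega>
  define H where "H \<omega> = (q \<omega> * l * sinh (l * norm (f \<omega>)) / norm (f \<omega>)) *\<^sub>R f \<omega>" for \<omega>
  have [measurable]: "f \<in> borel_measurable M" "p \<in> borel_measurable M" "v \<in> borel_measurable M"
    "D \<in> borel_measurable M"
    using f p v D by (auto intro: measurable_from_subalg[OF subalg])
  have q: "0 \<le> q \<omega>" "q \<omega> \<le> p \<omega>" for \<omega>
    using p(2)[of \<omega>] v(2)[of \<omega>] by (auto simp: q_def intro: mult_left_le)
  have c_bound: "\<bar>c \<omega>\<bar> \<le> B" for \<omega>
  proof -
    have "c \<omega> \<le> p \<omega> * cosh (l * norm (f \<omega>))" unfolding c_def by (intro mult_right_mono q(2) cosh_real_nonneg)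
    moreover have "0 \<le> c \<omega>" using q(1)[of \<omega>] by (simp add: c_def cosh_real_nonneg)
    ultimately show ?thesis using bounded[of \<omega>] by (simp add: abs_le_iff)
  qed
  have H_bound: "norm (H \<omega>) \<le> l * B" for \<omega>
  proof (cases "f \<omega> = 0")
    case False
    have "norm (H \<omega>) = l * (q \<omega> * sinh (l * norm (f \<omega>)))"
      using False q(1)[of \<omega>] l by (simp add: H_def abs_mult)
    also have "\<dots> \<le> l * (p \<omega> * cosh (l * norm (f \<omega>)))"
      using q[of \<omega>] l p(2) by (intro mult_left_mono mult_mono sinh_le_cosh_real) (auto simp: cosh_real_nonneg)
    finally show ?thesis using bounded[of \<omega>] l by (meson mult_left_mono order_trans)
  qed (use l bounded[of \<omega>] p(2)[of \<omega>] in \<open>auto simp: H_def cosh_real_nonneg intro: order_trans\<close>)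
  have g_le: "?g \<omega> \<le> c \<omega> + l\<^sup>2 * (c \<omega> * (norm (D \<omega>))\<^sup>2) + inner (H \<omega>) (D \<omega>)" for \<omega>
    using mult_left_mono[OF cosh_norm_add_mult_exp_le[OF l, of "f \<omega>" "D \<omega>"] q(1)[of \<omega>]]
    by (simp add: q_def c_def H_def algebra_simps)
  have c: "c \<in> borel_measurable F" and H: "H \<in> borel_measurable F"
    unfolding c_def H_def q_def using f p v by measurable
  have g: "?g \<in> borel_measurable M" "0 \<le> ?g \<omega>" for \<omega>
    using p(2)[of \<omega>] by (auto simp: cosh_real_nonneg)
  note compensated = integral_le_compensated[OF D D_sq v(1,3) c c_bound H H_bound g g_le]
  show "integrable M ?g" by (rule compensated(1))
  note compensated(3)
  also have "(\<integral>\<omega>. c \<omega> + l\<^sup>2 * (c \<omega> * v \<omega>) \<partial>M) \<le> (\<integral>\<omega>. p \<omega> * cosh (l * norm (f \<omega>)) \<partial>M)"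
  proof (intro integral_mono compensated(2))
    show "integrable M (\<lambda>\<omega>. p \<omega> * cosh (l * norm (f \<omega>)))"
      using bounded p(2) by (intro integrable_const_bound[where B = B]) (auto simp: cosh_real_nonneg)
    show "c \<omega> + l\<^sup>2 * (c \<omega> * v \<omega>) \<le> p \<omega> * cosh (l * norm (f \<omega>))" for \<omega>
      using mult_left_mono[OF exp_minus_mult_one_plus_le[of "l\<^sup>2 * v \<omega>"],
          of "p \<omega> * cosh (l * norm (f \<omega>))"] p(2)[of \<omega>] cosh_real_nonneg[of "l * norm (f \<omega>)"]
      by (simp add: q_def c_def algebra_simps)
  qed
  finally show "(\<integral>\<omega>. ?g \<omega> \<partial>M) \<le> (\<integral>\<omega>. p \<omega> * cosh (l * norm (f \<omega>)) \<partial>M)" .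
qed

lemma excess_le_nn_integral_tail:
  fixes t c :: real assumes c: "0 < c" and t: "0 \<le> t"
  shows "ennreal (max 0 (t - c\<^sup>2))
    \<le> (\<integral>\<^sup>+u. ennreal (if 1 \<le> u \<and> c * u < sqrt t then 2 * c\<^sup>2 * u else 0) \<partial>lborel)"
proof (cases "t \<le> c\<^sup>2")
  case False
  define r where "r = sqrt t / c"
  have r2: "c\<^sup>2 * r\<^sup>2 = t" using c t by (simp add: r_def power_divide)
  have r1: "1 \<le> r"
  proof (rule ccontr)
    assume "\<not> 1 \<le> r"
    then have "c\<^sup>2 * r\<^sup>2 \<le> c\<^sup>2" using c t by (simp add: r_def power_le_one)
    then show False using r2 False by simp
  qed
  have "((\<lambda>u. c\<^sup>2 * u\<^sup>2) has_vector_derivative 2 * c\<^sup>2 * u) (at u within {1..r})" for u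
    unfolding has_real_derivative_iff_has_vector_derivative[symmetric] by (auto intro!: derivative_eq_intros)
  then have "((\<lambda>u. 2 * c\<^sup>2 * u) has_integral (c\<^sup>2 * r\<^sup>2 - c\<^sup>2 * 1\<^sup>2)) {1..r}"
    using fundamental_theorem_of_calculus[OF r1, of "\<lambda>u. c\<^sup>2 * u\<^sup>2" "\<lambda>u. 2 * c\<^sup>2 * u"] by simp
  then have "((\<lambda>u. if u \<in> {1..r} then 2 * c\<^sup>2 * u else 0) has_integral (t - c\<^sup>2)) UNIV"
    unfolding has_integral_restrict_UNIV using r2 by simp
  then have "(\<integral>\<^sup>+u. ennreal (if u \<in> {1..r} then 2 * c\<^sup>2 * u else 0) \<partial>lborel) = ennreal (t - c\<^sup>2)"
    by (intro nn_integral_has_integral_lborel) auto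
  moreover have "(\<integral>\<^sup>+u. ennreal (if u \<in> {1..r} then 2 * c\<^sup>2 * u else 0) \<partial>lborel)
      \<le> (\<integral>\<^sup>+u. ennreal (if 1 \<le> u \<and> c * u < sqrt t then 2 * c\<^sup>2 * u else 0) \<partial>lborel)"
  proof (rule nn_integral_mono_AE)
    show "AE u in lborel. ennreal (if u \<in> {1..r} then 2 * c\<^sup>2 * u else 0)
        \<le> ennreal (if 1 \<le> u \<and> c * u < sqrt t then 2 * c\<^sup>2 * u else 0)"
      using AE_lborel_singleton[of r]
    proof eventually_elim
      case (elim u)
      show ?case
      proof (cases "u \<in> {1..r}")
        case True
        with elim have "c * u < sqrt t" using c by (simp add: r_def field_simps)
        with True show ?thesis by simp
      qed auto
    qed
  qed
  ultimately show ?thesis using False by simp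
next
  case True
  then have "max 0 (t - c\<^sup>2) = 0" by simp
  then show ?thesis by (simp only: ennreal_0 zero_le)
qed

lemma (in finite_measure) borel_measurable_measure_mult_less:
  fixes f :: "'a \<Rightarrow> real" and c :: real
  assumes "f \<in> borel_measurable M" "0 \<le> c"
  shows "(\<lambda>u. measure M {\<omega> \<in> space M. c * u < f \<omega>}) \<in> borel_measurable borel"
proof -
  have "mono (\<lambda>u. - measure M {\<omega> \<in> space M. c * u < f \<omega>})"
  proof (rule monoI)
    fix u v :: real assume "u \<le> v"
    then have "{\<omega> \<in> space M. c * v < f \<omega>} \<subseteq> {\<omega> \<in> space M. c * u < f \<omega>}"
      using assms(2) by (auto intro: order.strict_trans1[OF mult_left_mono])
    moreover have "{\<omega> \<in> space M. c * u < f \<omega>} \<in> sets M" using assms(1) by measurable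
    ultimately show "- measure M {\<omega> \<in> space M. c * u < f \<omega>} \<le> - measure M {\<omega> \<in> space M. c * v < f \<omega>}"
      by (simp add: finite_measure_mono)
  qed
  then have "(\<lambda>u. - (- measure M {\<omega> \<in> space M. c * u < f \<omega>})) \<in> borel_measurable borel"
    by (intro borel_measurable_uminus borel_measurable_mono)
  then show ?thesis by simp
qed

lemma (in finite_measure) nn_integral_excess_le_tail_integral:
  fixes T :: "'a \<Rightarrow> real"
  assumes T: "T \<in> borel_measurable M" "\<And>\<omega>. 0 \<le> T \<omega>" and c: "0 < c"
  shows "(\<integral>\<^sup>+\<omega>. ennreal (max 0 (T \<omega> - c\<^sup>2)) \<partial>M)
    \<le> ennreal (2 * c\<^sup>2) * (\<integral>\<^sup>+ u \<in> {1..}. ennreal (u * measure M {\<omega> \<in> space M. sqrt (T \<omega>) > c * u}) \<partial>lborel)"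
proof -
  interpret pair_sigma_finite M "lborel :: real measure" ..
  define tail where "tail u = measure M {\<omega> \<in> space M. sqrt (T \<omega>) > c * u}" for u
  define g where "g \<omega> u = ennreal (if 1 \<le> u \<and> c * u < sqrt (T \<omega>) then 2 * c\<^sup>2 * u else 0)" for \<omega> u
  have [measurable]: "case_prod g \<in> borel_measurable (M \<Otimes>\<^sub>M lborel)" unfolding g_def using T(1) by measurable
  have [measurable]: "tail \<in> borel_measurable borel"
    unfolding tail_def[abs_def] using T(1) c by (intro borel_measurable_measure_mult_less) auto
  have "(\<integral>\<^sup>+\<omega>. ennreal (max 0 (T \<omega> - c\<^sup>2)) \<partial>M) \<le> (\<integral>\<^sup>+\<omega>. (\<integral>\<^sup>+u. g \<omega> u \<partial>lborel) \<partial>M)"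
    unfolding g_def by (intro nn_integral_mono excess_le_nn_integral_tail c T(2))
  also have "\<dots> = (\<integral>\<^sup>+u. (\<integral>\<^sup>+\<omega>. g \<omega> u \<partial>M) \<partial>lborel)" by (rule Fubini'[symmetric]) measurable
  also have "\<dots> = (\<integral>\<^sup>+u. ennreal (2 * c\<^sup>2) * (ennreal (u * tail u) * indicator {1..} u) \<partial>lborel)"
  proof (intro nn_integral_cong)
    fix u :: real
    have S: "{\<omega> \<in> space M. c * u < sqrt (T \<omega>)} \<in> sets M" using T(1) by measurable
    then show "(\<integral>\<^sup>+\<omega>. g \<omega> u \<partial>M) = ennreal (2 * c\<^sup>2) * (ennreal (u * tail u) * indicator {1..} u)"
    proof (cases "1 \<le> u")
      case True
      then have "(\<integral>\<^sup>+\<omega>. g \<omega> u \<partial>M)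
          = (\<integral>\<^sup>+\<omega>. ennreal (2 * c\<^sup>2 * u) * indicator {\<omega> \<in> space M. c * u < sqrt (T \<omega>)} \<omega> \<partial>M)"
        by (intro nn_integral_cong) (auto simp: g_def indicator_def)
      also have "\<dots> = ennreal (2 * c\<^sup>2 * u) * emeasure M {\<omega> \<in> space M. c * u < sqrt (T \<omega>)}"
        using S by (simp add: nn_integral_cmult_indicator)
      finally show ?thesis
        using True by (simp add: tail_def emeasure_eq_measure ennreal_mult[symmetric] mult.assoc)
    qed (simp add: g_def)
  qed
  also have "\<dots> = ennreal (2 * c\<^sup>2) * (\<integral>\<^sup>+ u \<in> {1..}. ennreal (u * tail u) \<partial>lborel)"
    by (rule nn_integral_cmult) measurable
  finally show ?thesis unfolding tail_def .
qed

locale hilbert_mds = prob_space M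
  for M :: "'a measure" +
  fixes F :: "nat \<Rightarrow> 'a measure"
    and D :: "nat \<Rightarrow> 'a \<Rightarrow> 'b::{real_inner, banach, second_countable_topology}"
  assumes filtration: "filtration M F"
    and mds: "martingale_difference M F D"
    and square_integrable: "\<And>j. j \<ge> 1 \<Longrightarrow> integrable M (\<lambda>\<omega>. (norm (D j \<omega>))\<^sup>2)"
    and cond_var_F0: "\<And>j. j \<ge> 1 \<Longrightarrow>
      AE \<omega> in M. real_cond_exp M (F (j - 1)) (\<lambda>\<omega>. (norm (D j \<omega>))\<^sup>2) \<omega>
                 = real_cond_exp M (F 0) (\<lambda>\<omega>. (norm (D j \<omega>))\<^sup>2) \<omega>"
begin

lemma subalgebra_F: "subalgebra M (F k)"
  using filtration by (simp add: filtration_def)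

lemma finite_measure_subalgebra_F: "finite_measure_subalgebra M (F k)"
  by (simp add: finite_measure_subalgebra_def finite_measure_subalgebra_axioms_def subalgebra_F
      finite_measure_axioms)

lemma measurable_F_M: "f \<in> borel_measurable (F k) \<Longrightarrow> f \<in> borel_measurable M"
  by (rule measurable_from_subalg[OF subalgebra_F])

lemma measurable_F_mono: "i \<le> k \<Longrightarrow> f \<in> borel_measurable (F i) \<Longrightarrow> f \<in> borel_measurable (F k)"
  using filtration subalgebra_F[of i] subalgebra_F[of k]
  by (intro measurable_from_subalg[of "F k" "F i"]) (auto simp: filtration_def subalgebra_def)

lemma D_measurable: "1 \<le> j \<Longrightarrow> j \<le> k \<Longrightarrow> D j \<in> borel_measurable (F k)"
  using mds measurable_F_mono[of j k] by (auto simp: martingale_difference_def)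

lemma D_integrable: "1 \<le> j \<Longrightarrow> integrable M (D j)"
  using mds by (simp add: martingale_difference_def)

lemma D_centered: "1 \<le> j \<Longrightarrow> \<forall>A\<in>sets (F (j - 1)). set_lebesgue_integral M A (D j) = 0"
  using mds by (simp add: martingale_difference_def)

definition partial_sum :: "nat \<Rightarrow> 'a \<Rightarrow> 'b" where
  "partial_sum k \<omega> = (\<Sum>j=1..k. D j \<omega>)"

definition square_sum :: "nat \<Rightarrow> 'a \<Rightarrow> real" where
  "square_sum k \<omega> = (\<Sum>j=1..k. (norm (D j \<omega>))\<^sup>2)"

text \<open>By \<open>cond_var_F0\<close> this is a version of \<open>E[\<parallel>D j\<parallel>\<^sup>2 | F (j - 1)]\<close>; taking the \<open>F 0\<close>-version
  makes every \<open>cond_var_sum n\<close> \<open>F 0\<close>-measurable, and \<open>max 0\<close> makes it nonnegative everywhere.\<close>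
definition cond_var :: "nat \<Rightarrow> 'a \<Rightarrow> real" where
  "cond_var j \<omega> = max 0 (real_cond_exp M (F 0) (\<lambda>\<omega>. (norm (D j \<omega>))\<^sup>2) \<omega>)"

definition cond_var_sum :: "nat \<Rightarrow> 'a \<Rightarrow> real" where
  "cond_var_sum k \<omega> = (\<Sum>j=1..k. cond_var j \<omega>)"

definition cosh_process :: "real \<Rightarrow> nat \<Rightarrow> 'a \<Rightarrow> real" where
  "cosh_process l k \<omega> =
     cosh (l * norm (partial_sum k \<omega>)) * exp (- (l\<^sup>2 * (square_sum k \<omega> + cond_var_sum k \<omega>)))"

definition stays_within :: "real \<Rightarrow> nat \<Rightarrow> 'a set" where
  "stays_within x k = {\<omega> \<in> space M. \<forall>i\<le>k. norm (partial_sum i \<omega>) \<le> x}"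

definition exits_at :: "real \<Rightarrow> nat \<Rightarrow> 'a set" where
  "exits_at x k = stays_within x (k - 1) - stays_within x k"

lemma partial_sum_measurable: "i \<le> k \<Longrightarrow> partial_sum i \<in> borel_measurable (F k)"
  unfolding partial_sum_def by (intro borel_measurable_sum D_measurable) auto

lemma square_sum_measurable: "i \<le> k \<Longrightarrow> square_sum i \<in> borel_measurable (F k)"
  unfolding square_sum_def
proof (intro borel_measurable_sum)
  fix j assume "i \<le> k" "j \<in> {1..i}"
  then have [measurable]: "D j \<in> borel_measurable (F k)" by (intro D_measurable) auto
  show "(\<lambda>\<omega>. (norm (D j \<omega>))\<^sup>2) \<in> borel_measurable (F k)" by measurable
qed

lemma cond_var_measurable: "cond_var j \<in> borel_measurable (F k)"
proof (rule measurable_F_mono[of 0])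
  show "cond_var j \<in> borel_measurable (F 0)" unfolding cond_var_def[abs_def] by measurable
qed simp

lemma cond_var_sum_measurable: "cond_var_sum i \<in> borel_measurable (F k)"
  unfolding cond_var_sum_def by (intro borel_measurable_sum cond_var_measurable)

lemma stays_within_sets: "stays_within x k \<in> sets (F k)"
proof -
  have "stays_within x k = space (F k) \<inter> (\<Inter>i\<in>{..k}. {\<omega> \<in> space (F k). norm (partial_sum i \<omega>) \<le> x})"
    using subalgebra_F[of k] by (auto simp: stays_within_def subalgebra_def)
  also have "\<dots> \<in> sets (F k)"
  proof (intro sets.Int sets.top sets.finite_INT)
    fix i assume "i \<in> {..k}"
    then have [measurable]: "partial_sum i \<in> borel_measurable (F k)" by (intro partial_sum_measurable) auto
    show "{\<omega> \<in> space (F k). norm (partial_sum i \<omega>) \<le> x} \<in> sets (F k)" by measurable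
  qed auto
  finally show ?thesis .
qed

lemma measurable_M [measurable]:
  "partial_sum k \<in> borel_measurable M" "square_sum k \<in> borel_measurable M"
  "cond_var_sum k \<in> borel_measurable M" "stays_within x k \<in> sets M"
  using measurable_F_M[OF partial_sum_measurable[OF order_refl]]
    measurable_F_M[OF square_sum_measurable[OF order_refl]]
    measurable_F_M[OF cond_var_sum_measurable] stays_within_sets[of x k] subalgebra_F[of k]
  by (auto simp: subalgebra_def)

lemma square_sum_mono: "i \<le> k \<Longrightarrow> square_sum i \<omega> \<le> square_sum k \<omega>"
  unfolding square_sum_def by (intro sum_mono2) auto

lemma cond_var_sum_mono: "i \<le> k \<Longrightarrow> cond_var_sum i \<omega> \<le> cond_var_sum k \<omega>"
  unfolding cond_var_sum_def cond_var_def by (intro sum_mono2) auto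

lemma cond_var_eq_real_cond_exp_F0:
  assumes "1 \<le> j"
  shows "AE \<omega> in M. cond_var j \<omega> = real_cond_exp M (F 0) (\<lambda>\<omega>. (norm (D j \<omega>))\<^sup>2) \<omega>"
proof -
  interpret finite_measure_subalgebra M "F 0" by (rule finite_measure_subalgebra_F)
  have [measurable]: "D j \<in> borel_measurable M" using D_integrable[OF assms] by auto
  have "AE \<omega> in M. 0 \<le> real_cond_exp M (F 0) (\<lambda>\<omega>. (norm (D j \<omega>))\<^sup>2) \<omega>"
    by (intro real_cond_exp_pos) auto
  then show ?thesis by eventually_elim (simp add: cond_var_def)
qed

lemma cond_var_eq_real_cond_exp:
  assumes "1 \<le> j"
  shows "AE \<omega> in M. cond_var j \<omega> = real_cond_exp M (F (j - 1)) (\<lambda>\<omega>. (norm (D j \<omega>))\<^sup>2) \<omega>"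
  using cond_var_eq_real_cond_exp_F0[OF assms] cond_var_F0[OF assms] by eventually_elim simp

lemma cosh_process_nonneg: "0 \<le> cosh_process l k \<omega>"
  by (simp add: cosh_process_def cosh_real_nonneg)

lemma square_sum_nonneg: "0 \<le> square_sum k \<omega>"
  by (simp add: square_sum_def sum_nonneg)

lemma cond_var_nonneg: "0 \<le> cond_var j \<omega>"
  by (simp add: cond_var_def)

lemma cond_var_sum_nonneg: "0 \<le> cond_var_sum k \<omega>"
  by (simp add: cond_var_sum_def sum_nonneg cond_var_nonneg)

lemma cosh_process_measurable [measurable]: "cosh_process l k \<in> borel_measurable M"
  unfolding cosh_process_def[abs_def] by measurable

lemma stopped_cosh_process_le:
  assumes "0 \<le> l"
  shows "indicator (stays_within x k) \<omega> * cosh_process l k \<omega> \<le> cosh (l * x)"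
proof (cases "\<omega> \<in> stays_within x k")
  case True
  then have "norm (partial_sum k \<omega>) \<le> x" "0 \<le> x"
    by (auto simp: stays_within_def intro: order_trans[OF norm_ge_zero])
  then have "cosh (l * norm (partial_sum k \<omega>)) \<le> cosh (l * x)"
    using assms by (subst cosh_real_nonneg_le_iff) (auto intro: mult_left_mono)
  moreover have "exp (- (l\<^sup>2 * (square_sum k \<omega> + cond_var_sum k \<omega>))) \<le> 1"
    using square_sum_nonneg cond_var_sum_nonneg by simp
  ultimately have "cosh_process l k \<omega> \<le> cosh (l * x) * 1"
    unfolding cosh_process_def by (intro mult_mono) (auto simp: cosh_real_nonneg)
  then show ?thesis using True by simp
qed (simp add: cosh_real_nonneg)

lemma integrable_stopped_cosh_process:
  "0 \<le> l \<Longrightarrow> integrable M (\<lambda>\<omega>. indicator (stays_within x k) \<omega> * cosh_process l k \<omega>)"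
  by (intro integrable_const_bound[where B = "cosh (l * x)"] AE_I2)
    (auto simp: stopped_cosh_process_le cosh_process_nonneg)

lemma stopped_cosh_process_step:
  assumes l: "0 \<le> l"
  shows "integrable M (\<lambda>\<omega>. indicator (stays_within x k) \<omega> * cosh_process l (Suc k) \<omega>)"
    and "(\<integral>\<omega>. indicator (stays_within x k) \<omega> * cosh_process l (Suc k) \<omega> \<partial>M)
      \<le> (\<integral>\<omega>. indicator (stays_within x k) \<omega> * cosh_process l k \<omega> \<partial>M)"
proof -
  interpret finite_measure_subalgebra M "F k" by (rule finite_measure_subalgebra_F)
  define p where
    "p \<omega> = indicator (stays_within x k) \<omega> * exp (- (l\<^sup>2 * (square_sum k \<omega> + cond_var_sum k \<omega>)))" for \<omega>
  have p_measurable: "p \<in> borel_measurable (F k)"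
    using stays_within_sets[of x k] square_sum_measurable[of k k] cond_var_sum_measurable[of k k]
    unfolding p_def by measurable
  have p_nonneg: "0 \<le> p \<omega>" for \<omega> by (simp add: p_def)
  have current: "indicator (stays_within x k) \<omega> * cosh_process l k \<omega> = p \<omega> * cosh (l * norm (partial_sum k \<omega>))"
    for \<omega> by (simp add: p_def cosh_process_def)
  have "p \<omega> * cosh (l * norm (partial_sum k \<omega>)) \<le> cosh (l * x)" for \<omega>
    using stopped_cosh_process_le[OF l, of x k \<omega>] by (simp add: current)
  note step = integral_cosh_norm_add_le[OF D_integrable D_centered[of "Suc k", simplified]
      square_integrable cond_var_measurable cond_var_nonneg cond_var_eq_real_cond_exp[of "Suc k", simplified]
      partial_sum_measurable[OF order_refl] p_measurable p_nonneg this l, simplified]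
  have "indicator (stays_within x k) \<omega> * cosh_process l (Suc k) \<omega>
      = p \<omega> * exp (- (l\<^sup>2 * cond_var (Suc k) \<omega>))
        * (cosh (l * norm (partial_sum k \<omega> + D (Suc k) \<omega>)) * exp (- (l\<^sup>2 * (norm (D (Suc k) \<omega>))\<^sup>2)))" for \<omega>
  proof -
    have "- (l\<^sup>2 * (square_sum (Suc k) \<omega> + cond_var_sum (Suc k) \<omega>))
        = - (l\<^sup>2 * (square_sum k \<omega> + cond_var_sum k \<omega>)) + - (l\<^sup>2 * cond_var (Suc k) \<omega>)
          + - (l\<^sup>2 * (norm (D (Suc k) \<omega>))\<^sup>2)"
      by (simp add: square_sum_def cond_var_sum_def algebra_simps)
    then have "exp (- (l\<^sup>2 * (square_sum (Suc k) \<omega> + cond_var_sum (Suc k) \<omega>)))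
        = exp (- (l\<^sup>2 * (square_sum k \<omega> + cond_var_sum k \<omega>))) * exp (- (l\<^sup>2 * cond_var (Suc k) \<omega>))
          * exp (- (l\<^sup>2 * (norm (D (Suc k) \<omega>))\<^sup>2))"
      by (simp only: exp_add)
    then show ?thesis by (simp add: p_def cosh_process_def partial_sum_def ac_simps)
  qed
  then show "integrable M (\<lambda>\<omega>. indicator (stays_within x k) \<omega> * cosh_process l (Suc k) \<omega>)"
    and "(\<integral>\<omega>. indicator (stays_within x k) \<omega> * cosh_process l (Suc k) \<omega> \<partial>M)
      \<le> (\<integral>\<omega>. indicator (stays_within x k) \<omega> * cosh_process l k \<omega> \<partial>M)"
    using step by (simp_all add: current)
qed

lemma integrable_exit_cosh_process:
  assumes "0 \<le> l" "1 \<le> i"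
  shows "integrable M (\<lambda>\<omega>. indicator (exits_at x i) \<omega> * cosh_process l i \<omega>)"
proof -
  obtain k where i: "i = Suc k" using assms(2) by (cases i) auto
  have "stays_within x (Suc k) \<subseteq> stays_within x k" by (auto simp: stays_within_def)
  then have "indicator (exits_at x i) \<omega> * cosh_process l i \<omega>
      = indicator (stays_within x k) \<omega> * cosh_process l (Suc k) \<omega>
        - indicator (stays_within x (Suc k)) \<omega> * cosh_process l (Suc k) \<omega>" for \<omega>
    by (auto simp: i exits_at_def indicator_def)
  then show ?thesis
    using stopped_cosh_process_step(1)[OF assms(1)] integrable_stopped_cosh_process[OF assms(1)] by simp
qed

lemma stopped_cosh_process_telescope:
  assumes l: "0 \<le> l" and x: "0 \<le> x"
  shows "(\<integral>\<omega>. indicator (stays_within x k) \<omega> * cosh_process l k \<omega> \<partial>M)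
    + (\<Sum>i=1..k. \<integral>\<omega>. indicator (exits_at x i) \<omega> * cosh_process l i \<omega> \<partial>M) \<le> 1"
proof (induction k)
  case 0
  have "stays_within x 0 = space M" using x by (auto simp: stays_within_def partial_sum_def)
  moreover have "cosh_process l 0 \<omega> = 1" for \<omega>
    by (simp add: cosh_process_def partial_sum_def square_sum_def cond_var_sum_def)
  ultimately show ?case by (simp add: prob_space)
next
  case (Suc k)
  have "stays_within x (Suc k) \<subseteq> stays_within x k" by (auto simp: stays_within_def)
  then have "indicator (stays_within x k) \<omega> * cosh_process l (Suc k) \<omega>
      = indicator (stays_within x (Suc k)) \<omega> * cosh_process l (Suc k) \<omega>
        + indicator (exits_at x (Suc k)) \<omega> * cosh_process l (Suc k) \<omega>" for \<omega>
    by (auto simp: exits_at_def indicator_def)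
  then have "(\<integral>\<omega>. indicator (stays_within x (Suc k)) \<omega> * cosh_process l (Suc k) \<omega> \<partial>M)
      + (\<integral>\<omega>. indicator (exits_at x (Suc k)) \<omega> * cosh_process l (Suc k) \<omega> \<partial>M)
      = (\<integral>\<omega>. indicator (stays_within x k) \<omega> * cosh_process l (Suc k) \<omega> \<partial>M)"
    using integrable_stopped_cosh_process[OF l] integrable_exit_cosh_process[OF l] by simp
  also have "\<dots> \<le> (\<integral>\<omega>. indicator (stays_within x k) \<omega> * cosh_process l k \<omega> \<partial>M)"
    by (rule stopped_cosh_process_step(2)[OF l])
  finally show ?case using Suc.IH by simp
qed

lemma first_exit:
  assumes "\<omega> \<in> space M" "0 \<le> x" "x < norm (partial_sum k \<omega>)"
  shows "\<exists>i\<in>{1..k}. \<omega> \<in> exits_at x i \<and> x < norm (partial_sum i \<omega>)"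
proof -
  define i where "i = (LEAST i. x < norm (partial_sum i \<omega>))"
  have exit: "x < norm (partial_sum i \<omega>)" using assms(3) unfolding i_def by (rule LeastI)
  have "i \<le> k" using assms(3) unfolding i_def by (rule Least_le)
  moreover have "i \<noteq> 0"
  proof
    assume "i = 0"
    with exit assms(2) show False by (simp add: partial_sum_def)
  qed
  moreover have "norm (partial_sum j \<omega>) \<le> x" if "j < i" for j
    using not_less_Least[OF that[unfolded i_def]] by simp
  ultimately show ?thesis
    using exit assms(1) by (intro bexI[of _ i]) (auto simp: exits_at_def stays_within_def)
qed

lemma cosh_bound_le_sum_exits:
  assumes l: "0 \<le> l" and x: "0 \<le> x" and \<omega>: "\<omega> \<in> space M"
    and k: "k \<in> {1..n}" "x < norm (partial_sum k \<omega>)"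
    and var: "square_sum n \<omega> + cond_var_sum n \<omega> \<le> b"
  shows "cosh (l * x) * exp (- (l\<^sup>2 * b)) \<le> (\<Sum>i=1..n. indicator (exits_at x i) \<omega> * cosh_process l i \<omega>)"
proof -
  obtain i where i: "i \<in> {1..k}" "\<omega> \<in> exits_at x i" "x < norm (partial_sum i \<omega>)"
    using first_exit[OF \<omega> x k(2)] by blast
  have "cosh (l * x) \<le> cosh (l * norm (partial_sum i \<omega>))"
    using i(3) l x by (subst cosh_real_nonneg_le_iff) (auto intro: mult_left_mono)
  moreover have "square_sum i \<omega> + cond_var_sum i \<omega> \<le> b"
    using square_sum_mono[of i n \<omega>] cond_var_sum_mono[of i n \<omega>] i(1) k(1) var by auto
  then have "exp (- (l\<^sup>2 * b)) \<le> exp (- (l\<^sup>2 * (square_sum i \<omega> + cond_var_sum i \<omega>)))"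
    by (simp add: mult_left_mono)
  ultimately have "cosh (l * x) * exp (- (l\<^sup>2 * b)) \<le> cosh_process l i \<omega>"
    unfolding cosh_process_def by (intro mult_mono) (auto simp: cosh_real_nonneg)
  also have "\<dots> = indicator (exits_at x i) \<omega> * cosh_process l i \<omega>" using i(2) by simp
  also have "\<dots> \<le> (\<Sum>i=1..n. indicator (exits_at x i) \<omega> * cosh_process l i \<omega>)"
    using i(1) k(1) by (intro member_le_sum) (auto simp: cosh_process_nonneg)
  finally show ?thesis .
qed

lemma measure_exit_le:
  assumes l: "0 \<le> l" and x: "0 \<le> x"
  shows "measure M {\<omega> \<in> space M. (\<exists>k\<in>{1..n}. x < norm (partial_sum k \<omega>))
           \<and> square_sum n \<omega> + cond_var_sum n \<omega> \<le> b}
    \<le> exp (l\<^sup>2 * b) / cosh (l * x)"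
proof -
  define A where "A = {\<omega> \<in> space M. (\<exists>k\<in>{1..n}. x < norm (partial_sum k \<omega>))
           \<and> square_sum n \<omega> + cond_var_sum n \<omega> \<le> b}"
  define K where "K = cosh (l * x) * exp (- (l\<^sup>2 * b))"
  have [measurable]: "A \<in> sets M" unfolding A_def by measurable
  have pointwise: "K * indicator A \<omega> \<le> (\<Sum>i=1..n. indicator (exits_at x i) \<omega> * cosh_process l i \<omega>)" for \<omega>
    using cosh_bound_le_sum_exits[OF l x, of \<omega> _ n b]
    by (cases "\<omega> \<in> A") (auto simp: A_def K_def sum_nonneg cosh_process_nonneg)
  have "(\<integral>\<omega>. K * indicator A \<omega> \<partial>M)
      \<le> (\<integral>\<omega>. (\<Sum>i=1..n. indicator (exits_at x i) \<omega> * cosh_process l i \<omega>) \<partial>M)"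
  proof (intro integral_mono pointwise)
    show "integrable M (\<lambda>\<omega>. K * indicator A \<omega>)"
      by (intro integrable_mult_right integrable_real_indicator) (auto simp: emeasure_eq_measure)
    show "integrable M (\<lambda>\<omega>. \<Sum>i=1..n. indicator (exits_at x i) \<omega> * cosh_process l i \<omega>)"
      using integrable_exit_cosh_process[OF l] by (intro Bochner_Integration.integrable_sum) auto
  qed
  also have "\<dots> = (\<Sum>i=1..n. \<integral>\<omega>. indicator (exits_at x i) \<omega> * cosh_process l i \<omega> \<partial>M)"
    using integrable_exit_cosh_process[OF l] by (intro Bochner_Integration.integral_sum) auto
  also have "\<dots> \<le> 1"
  proof -
    have "0 \<le> (\<integral>\<omega>. indicator (stays_within x n) \<omega> * cosh_process l n \<omega> \<partial>M)"
      by (intro integral_nonneg_AE AE_I2) (simp add: cosh_process_nonneg)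
    then show ?thesis using stopped_cosh_process_telescope[OF l x, of n] by simp
  qed
  finally have "K * measure M A \<le> 1" by simp
  moreover have "0 < K" by (simp add: K_def cosh_real_pos)
  ultimately show ?thesis by (simp add: A_def K_def exp_minus field_simps)
qed

lemma measure_exit_gaussian_le:
  assumes x: "0 < x" and y: "0 < y"
  shows "measure M {\<omega> \<in> space M. (\<exists>k\<in>{1..n}. x < norm (partial_sum k \<omega>))
           \<and> square_sum n \<omega> + cond_var_sum n \<omega> \<le> 5 * (y / 8)\<^sup>2}
    \<le> 2 * exp (- (x\<^sup>2 / y\<^sup>2))"
proof -
  define l where "l = 2 * x / y\<^sup>2"
  have "l\<^sup>2 * (5 * (y / 8)\<^sup>2) - l * x = - (27 / 16) * (x\<^sup>2 / y\<^sup>2)"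
    using y by (simp add: l_def power2_eq_square field_simps)
  also have "\<dots> \<le> - (x\<^sup>2 / y\<^sup>2)"
  proof -
    have "0 \<le> x\<^sup>2 / y\<^sup>2" by simp
    then show ?thesis by linarith
  qed
  finally have "exp (l\<^sup>2 * (5 * (y / 8)\<^sup>2) - l * x) \<le> exp (- (x\<^sup>2 / y\<^sup>2))" by simp
  then have "exp (l\<^sup>2 * (5 * (y / 8)\<^sup>2)) / cosh (l * x) \<le> 2 * exp (- (x\<^sup>2 / y\<^sup>2))"
    using exp_div_cosh_le[of "l\<^sup>2 * (5 * (y / 8)\<^sup>2)" "l * x"] by linarith
  moreover have "0 \<le> l" using x y by (simp add: l_def)
  ultimately show ?thesis using measure_exit_le[of l x n "5 * (y / 8)\<^sup>2"] x by simp
qed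

lemma integrable_cond_var: "1 \<le> j \<Longrightarrow> integrable M (cond_var j)"
proof -
  interpret finite_measure_subalgebra M "F 0" by (rule finite_measure_subalgebra_F)
  assume "1 \<le> j"
  then show ?thesis unfolding cond_var_def[abs_def]
    by (intro integrable_max Bochner_Integration.integrable_zero real_cond_exp_int(1) square_integrable)
qed

lemma integrable_square_sum: "integrable M (square_sum n)"
  unfolding square_sum_def[abs_def] using square_integrable by (intro Bochner_Integration.integrable_sum) auto

lemma integrable_cond_var_sum: "integrable M (cond_var_sum n)"
  unfolding cond_var_sum_def[abs_def] using integrable_cond_var by (intro Bochner_Integration.integrable_sum) auto

lemma integral_indicator_cond_var_sum:
  assumes A: "A \<in> sets (F 0)"
  shows "(\<integral>\<omega>. indicator A \<omega> * cond_var_sum n \<omega> \<partial>M) = (\<integral>\<omega>. indicator A \<omega> * square_sum n \<omega> \<partial>M)"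
proof -
  interpret finite_measure_subalgebra M "F 0" by (rule finite_measure_subalgebra_F)
  have [measurable]: "indicator A \<in> borel_measurable (F 0)" using A by simp
  have AM: "A \<in> sets M" using A subalgebra_F[of 0] by (auto simp: subalgebra_def)
  have summand: "(\<integral>\<omega>. indicator A \<omega> * cond_var j \<omega> \<partial>M) = (\<integral>\<omega>. indicator A \<omega> * (norm (D j \<omega>))\<^sup>2 \<partial>M)"
    if "j \<in> {1..n}" for j
  proof -
    have "(\<integral>\<omega>. indicator A \<omega> * cond_var j \<omega> \<partial>M)
        = (\<integral>\<omega>. indicator A \<omega> * real_cond_exp M (F 0) (\<lambda>\<omega>. (norm (D j \<omega>))\<^sup>2) \<omega> \<partial>M)"
      using cond_var_eq_real_cond_exp_F0[of j] that AM measurable_F_M[OF cond_var_measurable[of j 0]]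
      by (intro integral_cong_AE) auto
    also have "\<dots> = (\<integral>\<omega>. indicator A \<omega> * (norm (D j \<omega>))\<^sup>2 \<partial>M)"
      using that square_integrable[of j] by (intro integral_bounded_mult_real_cond_exp[where C = 1]) auto
    finally show ?thesis .
  qed
  have int_v: "integrable M (\<lambda>\<omega>. indicator A \<omega> * cond_var j \<omega>)"
    and int_q: "integrable M (\<lambda>\<omega>. indicator A \<omega> * (norm (D j \<omega>))\<^sup>2)" if "j \<in> {1..n}" for j
    using that AM integrable_cond_var[of j] square_integrable[of j]
    by (auto intro!: integrable_bounded_mult[where C = 1])
  have "(\<integral>\<omega>. indicator A \<omega> * cond_var_sum n \<omega> \<partial>M) = (\<Sum>j=1..n. \<integral>\<omega>. indicator A \<omega> * cond_var j \<omega> \<partial>M)"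
    unfolding cond_var_sum_def sum_distrib_left by (intro Bochner_Integration.integral_sum int_v)
  also have "\<dots> = (\<Sum>j=1..n. \<integral>\<omega>. indicator A \<omega> * (norm (D j \<omega>))\<^sup>2 \<partial>M)"
    by (intro sum.cong refl summand)
  also have "\<dots> = (\<integral>\<omega>. indicator A \<omega> * square_sum n \<omega> \<partial>M)"
    unfolding square_sum_def sum_distrib_left by (intro Bochner_Integration.integral_sum[symmetric] int_q)
  finally show ?thesis .
qed

lemma measure_square_sum_gt_le:
  assumes c: "0 < c"
  shows "2 * c\<^sup>2 * measure M {\<omega> \<in> space M. 3 * c\<^sup>2 < square_sum n \<omega>}
    \<le> (\<integral>\<omega>. max 0 (square_sum n \<omega> - c\<^sup>2) \<partial>M)"
proof -
  have "measure M {\<omega> \<in> space M. 3 * c\<^sup>2 < square_sum n \<omega>}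
      \<le> measure M {\<omega> \<in> space M. 2 * c\<^sup>2 \<le> max 0 (square_sum n \<omega> - c\<^sup>2)}"
    by (intro finite_measure_mono) auto
  also have "\<dots> \<le> (\<integral>\<omega>. max 0 (square_sum n \<omega> - c\<^sup>2) \<partial>M) / (2 * c\<^sup>2)"
    using c integrable_square_sum[of n]
    by (intro integral_Markov_inequality_measure[where A = "space M"]) auto
  finally show ?thesis using c by (simp add: field_simps)
qed

lemma measure_cond_var_sum_gt_le:
  assumes c: "0 < c"
  shows "c\<^sup>2 * measure M {\<omega> \<in> space M. 2 * c\<^sup>2 < cond_var_sum n \<omega>}
    \<le> (\<integral>\<omega>. max 0 (square_sum n \<omega> - c\<^sup>2) \<partial>M)"
proof -
  define A where "A = {\<omega> \<in> space M. c\<^sup>2 < cond_var_sum n \<omega>}"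
  have [measurable]: "cond_var_sum n \<in> borel_measurable (F 0)" by (rule cond_var_sum_measurable)
  have "A = {\<omega> \<in> space (F 0). c\<^sup>2 < cond_var_sum n \<omega>}"
    using subalgebra_F[of 0] by (simp add: A_def subalgebra_def)
  also have "\<dots> \<in> sets (F 0)" by measurable
  finally have A: "A \<in> sets (F 0)" .
  then have AM [measurable]: "A \<in> sets M" using subalgebra_F[of 0] by (auto simp: subalgebra_def)
  have int_AW: "integrable M (\<lambda>\<omega>. indicator A \<omega> * cond_var_sum n \<omega>)"
    by (intro integrable_bounded_mult[where C = 1] integrable_cond_var_sum) auto
  have int_AT: "integrable M (\<lambda>\<omega>. indicator A \<omega> * square_sum n \<omega>)"
    by (intro integrable_bounded_mult[where C = 1] integrable_square_sum) auto
  have int_A: "integrable M (\<lambda>\<omega>. c\<^sup>2 * indicator A \<omega>)"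
    by (intro integrable_mult_right integrable_real_indicator) (auto simp: emeasure_eq_measure)
  have "c\<^sup>2 * measure M {\<omega> \<in> space M. 2 * c\<^sup>2 < cond_var_sum n \<omega>}
      = (\<integral>\<omega>. c\<^sup>2 * indicator {\<omega> \<in> space M. 2 * c\<^sup>2 < cond_var_sum n \<omega>} \<omega> \<partial>M)"
    by simp
  also have "\<dots> \<le> (\<integral>\<omega>. indicator A \<omega> * cond_var_sum n \<omega> - c\<^sup>2 * indicator A \<omega> \<partial>M)"
  proof (intro integral_mono)
    show "integrable M (\<lambda>\<omega>. c\<^sup>2 * indicator {\<omega> \<in> space M. 2 * c\<^sup>2 < cond_var_sum n \<omega>} \<omega>)"
      by (intro integrable_mult_right integrable_real_indicator) (auto simp: emeasure_eq_measure)
    show "c\<^sup>2 * indicator {\<omega> \<in> space M. 2 * c\<^sup>2 < cond_var_sum n \<omega>} \<omega>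
        \<le> indicator A \<omega> * cond_var_sum n \<omega> - c\<^sup>2 * indicator A \<omega>" for \<omega>
      using c cond_var_sum_nonneg[of n \<omega>] by (simp add: A_def indicator_def)
  qed (use int_AW int_A in simp)
  also have "\<dots> = (\<integral>\<omega>. indicator A \<omega> * square_sum n \<omega> - c\<^sup>2 * indicator A \<omega> \<partial>M)"
    using int_AW int_AT int_A integral_indicator_cond_var_sum[OF A] by simp
  also have "\<dots> \<le> (\<integral>\<omega>. max 0 (square_sum n \<omega> - c\<^sup>2) \<partial>M)"
    using int_AT int_A integrable_square_sum[of n] by (intro integral_mono) (simp_all add: indicator_def)
  finally show ?thesis .
qed

lemma ennreal_measure_le_tail_integral:
  assumes c: "0 < c" and a: "0 < a"
    and le: "a * measure M S \<le> (\<integral>\<omega>. max 0 (square_sum n \<omega> - c\<^sup>2) \<partial>M)"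
  shows "ennreal (measure M S) \<le> ennreal (2 * c\<^sup>2 / a)
    * (\<integral>\<^sup>+ u \<in> {1..}. ennreal (u * measure M {\<omega> \<in> space M. sqrt (square_sum n \<omega>) > c * u}) \<partial>lborel)"
    (is "_ \<le> _ * ?I")
proof -
  have "ennreal (a * measure M S) \<le> ennreal (\<integral>\<omega>. max 0 (square_sum n \<omega> - c\<^sup>2) \<partial>M)"
    using le by (rule ennreal_leI)
  also have "\<dots> = (\<integral>\<^sup>+\<omega>. ennreal (max 0 (square_sum n \<omega> - c\<^sup>2)) \<partial>M)"
    using integrable_square_sum[of n] by (intro nn_integral_eq_integral[symmetric]) auto
  also have "\<dots> \<le> ennreal (2 * c\<^sup>2) * ?I"
    by (rule nn_integral_excess_le_tail_integral[OF _ square_sum_nonneg c]) measurable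
  finally have "ennreal (1 / a) * ennreal (a * measure M S) \<le> ennreal (1 / a) * (ennreal (2 * c\<^sup>2) * ?I)"
    by (rule mult_left_mono) simp
  also have "ennreal (1 / a) * (ennreal (2 * c\<^sup>2) * ?I) = ennreal (1 / a * (2 * c\<^sup>2)) * ?I"
    using a by (subst ennreal_mult) (auto simp: mult.assoc)
  finally show ?thesis using a by (simp add: ennreal_mult[symmetric] field_simps)
qed

lemma measure_exceeds_le:
  "measure M {\<omega> \<in> space M. \<exists>k\<in>{1..n}. x < norm (partial_sum k \<omega>)}
    \<le> measure M {\<omega> \<in> space M. (\<exists>k\<in>{1..n}. x < norm (partial_sum k \<omega>))
                   \<and> square_sum n \<omega> + cond_var_sum n \<omega> \<le> a + b}
      + measure M {\<omega> \<in> space M. a < square_sum n \<omega>} + measure M {\<omega> \<in> space M. b < cond_var_sum n \<omega>}"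
  (is "measure M ?A \<le> measure M ?E + measure M ?T + measure M ?W")
proof -
  have "measure M ?A \<le> measure M (?E \<union> ?T \<union> ?W)" by (intro finite_measure_mono) auto
  also have "\<dots> \<le> measure M (?E \<union> ?T) + measure M ?W" by (intro measure_Un_le) auto
  also have "\<dots> \<le> measure M ?E + measure M ?T + measure M ?W" by (intro add_right_mono measure_Un_le) auto
  finally show ?thesis .
qed

lemma measure_exceeds_tail_bound:
  assumes x: "0 < x" and y: "0 < y"
  shows "ennreal (measure M {\<omega> \<in> space M. \<exists>k\<in>{1..n}. x < norm (partial_sum k \<omega>)})
    \<le> ennreal (4 * exp (- (x\<^sup>2 / y\<^sup>2)))
      + 4 * (\<integral>\<^sup>+ u \<in> {1..}. ennreal (u * measure M {\<omega> \<in> space M. sqrt (square_sum n \<omega>) > y / 8 * u}) \<partial>lborel)"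
proof -
  define c where "c = y / 8"
  define I where "I = (\<integral>\<^sup>+ u \<in> {1..}. ennreal (u * measure M {\<omega> \<in> space M. sqrt (square_sum n \<omega>) > c * u}) \<partial>lborel)"
  have c: "0 < c" using y by (simp add: c_def)
  have "ennreal (measure M {\<omega> \<in> space M. \<exists>k\<in>{1..n}. x < norm (partial_sum k \<omega>)})
      \<le> ennreal (measure M {\<omega> \<in> space M. (\<exists>k\<in>{1..n}. x < norm (partial_sum k \<omega>))
                   \<and> square_sum n \<omega> + cond_var_sum n \<omega> \<le> 3 * c\<^sup>2 + 2 * c\<^sup>2})
        + ennreal (measure M {\<omega> \<in> space M. 3 * c\<^sup>2 < square_sum n \<omega>})
        + ennreal (measure M {\<omega> \<in> space M. 2 * c\<^sup>2 < cond_var_sum n \<omega>})"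
    using measure_exceeds_le[of n x "3 * c\<^sup>2" "2 * c\<^sup>2"] by (simp flip: ennreal_plus)
  also have "\<dots> \<le> ennreal (4 * exp (- (x\<^sup>2 / y\<^sup>2))) + I + 2 * I"
  proof (intro add_mono ennreal_leI)
    show "measure M {\<omega> \<in> space M. (\<exists>k\<in>{1..n}. x < norm (partial_sum k \<omega>))
        \<and> square_sum n \<omega> + cond_var_sum n \<omega> \<le> 3 * c\<^sup>2 + 2 * c\<^sup>2} \<le> 4 * exp (- (x\<^sup>2 / y\<^sup>2))"
      using measure_exit_gaussian_le[OF x y, of n] exp_gt_zero[of "- (x\<^sup>2 / y\<^sup>2)"]
      by (simp add: c_def del: exp_gt_zero)
    show "ennreal (measure M {\<omega> \<in> space M. 3 * c\<^sup>2 < square_sum n \<omega>}) \<le> I"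
      using ennreal_measure_le_tail_integral[OF c _ measure_square_sum_gt_le[OF c]] c by (simp add: I_def)
    show "ennreal (measure M {\<omega> \<in> space M. 2 * c\<^sup>2 < cond_var_sum n \<omega>}) \<le> 2 * I"
      using ennreal_measure_le_tail_integral[OF c _ measure_cond_var_sum_gt_le[OF c]] c by (simp add: I_def)
  qed
  also have "\<dots> \<le> ennreal (4 * exp (- (x\<^sup>2 / y\<^sup>2))) + 4 * I"
  proof -
    have "I + 2 * I = (1 + 2) * I" by (simp only: distrib_right mult_1)
    also have "\<dots> \<le> 4 * I" by (intro mult_right_mono) auto
    finally show ?thesis by (subst add.assoc) (rule add_left_mono)
  qed
  finally show ?thesis by (simp add: I_def c_def)
qed

end

theorem propositionA5:
  fixes M :: "'a measure" and F :: "nat \<Rightarrow> 'a measure"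
    and D :: "nat \<Rightarrow> 'a \<Rightarrow> 'b::{real_inner, banach, second_countable_topology}"
    and n :: nat and x y :: real
  assumes "prob_space M"
    and "filtration M F"
    and "martingale_difference M F D"
    and "\<And>j. j \<ge> 1 \<Longrightarrow> integrable M (\<lambda>\<omega>. (norm (D j \<omega>))\<^sup>2)"
    and "\<And>j. j \<ge> 1 \<Longrightarrow>
           AE \<omega> in M. real_cond_exp M (F (j - 1)) (\<lambda>\<omega>. (norm (D j \<omega>))\<^sup>2) \<omega>
                      = real_cond_exp M (F 0) (\<lambda>\<omega>. (norm (D j \<omega>))\<^sup>2) \<omega>"
    and "n \<ge> 1" and "x > 0" and "y > 0"
  shows "ennreal (measure M {\<omega> \<in> space M. (MAX k\<in>{1..n}. norm (\<Sum>j=1..k. D j \<omega>)) > x})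
         \<le> ennreal (4 * exp (- (x\<^sup>2 / y\<^sup>2)))
           + 4 * (\<integral>\<^sup>+ u \<in> {1..}. ennreal (u * measure M {\<omega> \<in> space M.
                      sqrt (\<Sum>j=1..n. (norm (D j \<omega>))\<^sup>2) > y * u / 8}) \<partial>lborel)"
proof -
  interpret hilbert_mds M F D
    using assms(1-5) by (intro hilbert_mds.intro hilbert_mds_axioms.intro) auto
  have "{\<omega> \<in> space M. (MAX k\<in>{1..n}. norm (\<Sum>j=1..k. D j \<omega>)) > x}
      = {\<omega> \<in> space M. \<exists>k\<in>{1..n}. x < norm (partial_sum k \<omega>)}"
    using \<open>n \<ge> 1\<close> by (auto simp: partial_sum_def Max_gr_iff)
  moreover have "{\<omega> \<in> space M. sqrt (square_sum n \<omega>) > y / 8 * u}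
      = {\<omega> \<in> space M. sqrt (\<Sum>j=1..n. (norm (D j \<omega>))\<^sup>2) > y * u / 8}" for u
    by (simp add: square_sum_def)
  ultimately show ?thesis
    using measure_exceeds_tail_bound[OF \<open>x > 0\<close> \<open>y > 0\<close>, of n] by simp
qed

end
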